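(* Let $(M,g_{\mu\nu})$ be a four-dimensional spacetime, let $T_{\mu\nu}$ be a given stress-energy tensor on $M$, let $\kappa=8\pi G/c^{4}$ and let $\Lambda\in\mathbb{R}$. Suppose $g_{\mu\nu}$ is a solution of Einstein's field equations $$R_{\mu\nu}-\tfrac12 R g_{\mu\nu}+\Lambda g_{\mu\nu}=\kappa T_{\mu\nu}$$ whose Ricci scalar $R=g^{\mu\nu}R_{\mu\nu}$ is equal to a constant $k$, and let $f$ be a differentiable real function. Then: (i) If $f'(k)\neq 0$, then $g_{\mu\nu}$ is a solution of the $f(R)$ field equations $f'(k)R_{\mu\nu}-\tfrac12 f(k)g_{\mu\nu}=\kappa T_{\mu\nu}$ if and only if $$\Big[\big(\tfrac{k}{2}-\Lambda\big)f'(k)-\tfrac12 f(k)\Big]g_{\mu\nu}+\big(f'(k)-1\big)\kappa T_{\mu\nu}=0.$$ (ii) If $f'(k)=0$ and $f(k)\neq \frac{k-4\Lambda}{2}$, then $g_{\mu\nu}$ is not a solution of the $f(R)$ field equations (so, for the given $T_{\mu\nu}$, GR and the $f(R)$ theory have no common solution with constant Ricci scalar $k$). (iii) If $f'(k)=0$ and $f(k)=\frac{k-4\Lambda}{2}$, then $g_{\mu\nu}$ is a solution of the $f(R)$ field equations whenever $g_{\mu\nu}$ has vanishing Ricci tensor or $g_{\mu\nu}$ is a vacuum solution ($T_{\mu\nu}=0$).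
   Context: $R_{\mu\nu}$ denotes the Ricci tensor of $g_{\mu\nu}$, $\nabla_\mu$ its Levi-Civita covariant derivative and $\square=g^{\mu\nu}\nabla_\mu\nabla_\nu$. For a differentiable function $f$, the $f(R)$ field equations (obtained by varying $\frac{1}{2\kappa}\int\sqrt{-g}\,f(R)\,d^4x+S_m$) are $$f'(R)R_{\mu\nu}-\tfrac12 f(R)g_{\mu\nu}-\nabla_\mu\nabla_\nu f'(R)+\square f'(R)\,g_{\mu\nu}=\kappa T_{\mu\nu};$$ for a metric whose Ricci scalar is the constant $k$ the derivative terms vanish and these equations reduce to $f'(k)R_{\mu\nu}-\tfrac12 f(k)g_{\mu\nu}=\kappa T_{\mu\nu}$. A vacuum solution is one with $T_{\mu\nu}=0$. *)

theory Defs
  imports "HOL-Analysis.Analysis"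
begin

text \<open>Local coordinate model: a spacetime region is an open set U of R^4 (coordinates
  x^0..x^3, index type 4); tensor fields are given by their components.\<close>

type_synonym field2 = "real^4 \<Rightarrow> real^4^4"

definition pd :: "4 \<Rightarrow> (real^4 \<Rightarrow> real) \<Rightarrow> real^4 \<Rightarrow> real" where
  "pd \<sigma> h x = deriv (\<lambda>t. h (x + t *\<^sub>R axis \<sigma> 1)) 0"

definition ginv :: "field2 \<Rightarrow> real^4 \<Rightarrow> real^4^4" where
  "ginv g x = matrix_inv (g x)"

definition christoffel :: "field2 \<Rightarrow> real^4 \<Rightarrow> 4 \<Rightarrow> 4 \<Rightarrow> 4 \<Rightarrow> real" where
  "christoffel g x l \<mu> \<nu> = (1/2) * (\<Sum>\<rho>\<in>UNIV. ginv g x $ l $ \<rho> *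
     (pd \<mu> (\<lambda>y. g y $ \<rho> $ \<nu>) x + pd \<nu> (\<lambda>y. g y $ \<rho> $ \<mu>) x - pd \<rho> (\<lambda>y. g y $ \<mu> $ \<nu>) x))"

text \<open>Ricci tensor R_{mu nu} = R^l_{mu l nu}.\<close>
definition ricci :: "field2 \<Rightarrow> field2" where
  "ricci g x = (\<chi> \<mu> \<nu>.
     (\<Sum>l\<in>UNIV. pd l (\<lambda>y. christoffel g y l \<mu> \<nu>) x - pd \<nu> (\<lambda>y. christoffel g y l \<mu> l) x)
   + (\<Sum>l\<in>UNIV. \<Sum>s\<in>UNIV. christoffel g x l l s * christoffel g x s \<mu> \<nu>
                           - christoffel g x l \<nu> s * christoffel g x s \<mu> l))"

definition ricci_scalar :: "field2 \<Rightarrow> real^4 \<Rightarrow> real" where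
  "ricci_scalar g x = (\<Sum>\<mu>\<in>UNIV. \<Sum>\<nu>\<in>UNIV. ginv g x $ \<mu> $ \<nu> * ricci g x $ \<mu> $ \<nu>)"

definition cov_hess :: "field2 \<Rightarrow> (real^4 \<Rightarrow> real) \<Rightarrow> real^4 \<Rightarrow> 4 \<Rightarrow> 4 \<Rightarrow> real" where
  "cov_hess g \<phi> x \<mu> \<nu> = pd \<mu> (pd \<nu> \<phi>) x - (\<Sum>l\<in>UNIV. christoffel g x l \<mu> \<nu> * pd l \<phi> x)"

definition box :: "field2 \<Rightarrow> (real^4 \<Rightarrow> real) \<Rightarrow> real^4 \<Rightarrow> real" where
  "box g \<phi> x = (\<Sum>\<mu>\<in>UNIV. \<Sum>\<nu>\<in>UNIV. ginv g x $ \<mu> $ \<nu> * cov_hess g \<phi> x \<mu> \<nu>)"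

definition eta :: "real^4^4" where
  "eta = (\<chi> i j. if i = j then (if i = 0 then -1 else 1) else 0)"

text \<open>Spacetime metric on U: symmetric, Lorentzian (congruent to eta) at each point,
  components twice differentiable.\<close>
definition spacetime_metric :: "(real^4) set \<Rightarrow> field2 \<Rightarrow> bool" where
  "spacetime_metric U g \<longleftrightarrow> open U \<and>
     (\<forall>x\<in>U. transpose (g x) = g x \<and>
        (\<exists>P::real^4^4. invertible P \<and> g x = transpose P ** eta ** P)) \<and>
     (\<forall>\<mu> \<nu>. \<forall>x\<in>U. (\<lambda>y. g y $ \<mu> $ \<nu>) differentiable (at x) \<and>
        (\<forall>\<sigma>. pd \<sigma> (\<lambda>y. g y $ \<mu> $ \<nu>) differentiable (at x)))"

definition kappa :: "real \<Rightarrow> real \<Rightarrow> real" where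
  "kappa G c = 8 * pi * G / c ^ 4"

definition einstein_solution :: "(real^4) set \<Rightarrow> real \<Rightarrow> real \<Rightarrow> field2 \<Rightarrow> field2 \<Rightarrow> bool" where
  "einstein_solution U \<kappa> \<Lambda> g T \<longleftrightarrow> (\<forall>x\<in>U. \<forall>\<mu> \<nu>.
     ricci g x $ \<mu> $ \<nu> - (1/2) * ricci_scalar g x * g x $ \<mu> $ \<nu> + \<Lambda> * g x $ \<mu> $ \<nu>
       = \<kappa> * T x $ \<mu> $ \<nu>)"

definition fR_solution :: "(real^4) set \<Rightarrow> real \<Rightarrow> (real \<Rightarrow> real) \<Rightarrow> field2 \<Rightarrow> field2 \<Rightarrow> bool" where
  "fR_solution U \<kappa> f g T \<longleftrightarrow> (\<forall>x\<in>U. \<forall>\<mu> \<nu>.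
     deriv f (ricci_scalar g x) * ricci g x $ \<mu> $ \<nu>
     - (1/2) * f (ricci_scalar g x) * g x $ \<mu> $ \<nu>
     - cov_hess g (\<lambda>y. deriv f (ricci_scalar g y)) x \<mu> \<nu>
     + box g (\<lambda>y. deriv f (ricci_scalar g y)) x * g x $ \<mu> $ \<nu>
       = \<kappa> * T x $ \<mu> $ \<nu>)"

end

theory Submission
  imports Defs
begin

text \<open>On the region, the Ricci scalar is the constant \<open>k\<close>, so \<open>f'(R)\<close> is constant and the
  derivative terms of the \<open>f(R)\<close> equations vanish; these reduce to
  \<open>f'(k) R\<^sub>\<mu>\<^sub>\<nu> - f(k)/2 g\<^sub>\<mu>\<^sub>\<nu> = \<kappa> T\<^sub>\<mu>\<^sub>\<nu>\<close>. Einstein's equations give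
  \<open>R\<^sub>\<mu>\<^sub>\<nu> = \<kappa> T\<^sub>\<mu>\<^sub>\<nu> + (k/2 - \<Lambda>) g\<^sub>\<mu>\<^sub>\<nu>\<close>, and contracting with \<open>g\<^sup>\<mu>\<^sup>\<nu>\<close> (using \<open>g\<^sup>\<mu>\<^sup>\<nu> g\<^sub>\<mu>\<^sub>\<nu> = 4\<close>)
  yields \<open>\<kappa> T = 4\<Lambda> - k\<close> for the trace of \<open>T\<close>. Substituting the first identity into the
  reduced equations gives (i); when \<open>f'(k) = 0\<close> they say \<open>\<kappa> T\<^sub>\<mu>\<^sub>\<nu> = -f(k)/2 g\<^sub>\<mu>\<^sub>\<nu>\<close>, whose trace
  forces \<open>f(k) = (k - 4\<Lambda>)/2\<close>, giving (ii) and, in the Ricci-flat or vacuum case, (iii).\<close>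

lemma matrix_inv_mult_left:
  fixes A :: "'a::semiring_1^'n^'n"
  assumes "invertible A"
  shows "matrix_inv A ** A = mat 1"
  using assms unfolding matrix_inv_def invertible_def by (rule someI2_ex) auto

lemma sum_entrywise_product_eq_trace:
  fixes A B :: "'a::comm_semiring_1^'n^'n"
  shows "(\<Sum>i\<in>UNIV. \<Sum>j\<in>UNIV. B $ i $ j * A $ i $ j) = trace (B ** transpose A)"
  by (simp add: trace_def matrix_matrix_mult_def transpose_def)

lemma invertible_eta: "invertible eta"
proof -
  have "eta ** eta = mat 1"
    by (simp add: vec_eq_iff eta_def mat_def matrix_matrix_mult_def
        if_distrib[of "\<lambda>x. x * _"] cong: if_cong)
  then show ?thesis unfolding invertible_def by blast
qed

lemma spacetime_metric_open: "spacetime_metric U g \<Longrightarrow> open U"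
  unfolding spacetime_metric_def by blast

lemma spacetime_metric_symmetric: "spacetime_metric U g \<Longrightarrow> x \<in> U \<Longrightarrow> transpose (g x) = g x"
  unfolding spacetime_metric_def by blast

lemma spacetime_metric_invertible:
  assumes "spacetime_metric U g" "x \<in> U"
  shows "invertible (g x)"
proof -
  obtain P :: "real^4^4" where P: "invertible P" "g x = transpose P ** eta ** P"
    using assms unfolding spacetime_metric_def by blast
  then show ?thesis
    by (simp add: invertible_mult invertible_eta transpose_invertible)
qed

lemma pd_eq_0_if_constant_on:
  assumes "open U" "x \<in> U" "\<forall>y\<in>U. h y = c"
  shows "pd \<sigma> h x = 0"
proof -
  let ?line = "\<lambda>t::real. x + t *\<^sub>R axis \<sigma> 1"
  have "open (?line -` U)"
    by (intro open_vimage assms(1) continuous_intros)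
  then have "((\<lambda>t. h (?line t)) has_field_derivative 0) (at 0)"
    by (rule has_field_derivative_transform_within_open[OF DERIV_const[of c]]) (use assms in auto)
  then show ?thesis unfolding pd_def by (rule DERIV_imp_deriv)
qed

lemma cov_hess_eq_0_if_constant_on:
  assumes "open U" "x \<in> U" "\<forall>y\<in>U. \<phi> y = c"
  shows "cov_hess g \<phi> x \<mu> \<nu> = 0"
proof -
  have "\<forall>y\<in>U. pd \<nu> \<phi> y = 0"
    using pd_eq_0_if_constant_on[OF assms(1) _ assms(3)] by blast
  then have "pd \<mu> (pd \<nu> \<phi>) x = 0"
    by (rule pd_eq_0_if_constant_on[OF assms(1,2)])
  moreover have "pd l \<phi> x = 0" for l
    by (rule pd_eq_0_if_constant_on[OF assms])
  ultimately show ?thesis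
    unfolding cov_hess_def by simp
qed

lemma box_eq_0_if_constant_on:
  assumes "open U" "x \<in> U" "\<forall>y\<in>U. \<phi> y = c"
  shows "box g \<phi> x = 0"
  unfolding box_def using cov_hess_eq_0_if_constant_on[OF assms] by simp

lemma fR_solution_iff_constant_scalar:
  assumes "open U" "\<forall>x\<in>U. ricci_scalar g x = k"
  shows "fR_solution U \<kappa> f g T \<longleftrightarrow>
    (\<forall>x\<in>U. deriv f k *\<^sub>R ricci g x - (f k / 2) *\<^sub>R g x = \<kappa> *\<^sub>R T x)"
proof -
  have "\<forall>y\<in>U. deriv f (ricci_scalar g y) = deriv f k"
    using assms(2) by simp
  note const = cov_hess_eq_0_if_constant_on[OF assms(1) _ this]
    box_eq_0_if_constant_on[OF assms(1) _ this]
  show ?thesis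
    unfolding fR_solution_def vec_eq_iff using assms(2) const by simp
qed

definition metric_trace :: "field2 \<Rightarrow> real^4 \<Rightarrow> real^4^4 \<Rightarrow> real" where
  "metric_trace g x A = (\<Sum>\<mu>\<in>UNIV. \<Sum>\<nu>\<in>UNIV. ginv g x $ \<mu> $ \<nu> * A $ \<mu> $ \<nu>)"

lemma ricci_scalar_eq_metric_trace: "ricci_scalar g x = metric_trace g x (ricci g x)"
  unfolding ricci_scalar_def metric_trace_def ..

lemma metric_trace_zero [simp]: "metric_trace g x 0 = 0"
  by (simp add: metric_trace_def)

lemma metric_trace_add [simp]:
  "metric_trace g x (A + B) = metric_trace g x A + metric_trace g x B"
  by (simp add: metric_trace_def algebra_simps sum.distrib)

lemma metric_trace_scaleR [simp]: "metric_trace g x (a *\<^sub>R A) = a * metric_trace g x A"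
  by (simp add: metric_trace_def algebra_simps sum_distrib_left)

lemma metric_trace_metric:
  assumes "spacetime_metric U g" "x \<in> U"
  shows "metric_trace g x (g x) = 4"
  using assms
  by (simp add: metric_trace_def ginv_def sum_entrywise_product_eq_trace
      spacetime_metric_symmetric spacetime_metric_invertible matrix_inv_mult_left trace_I)

lemma scaled_field_equation_iff:
  fixes R G T :: "'a::real_vector"
  assumes "R = \<kappa> *\<^sub>R T + a *\<^sub>R G"
  shows "F *\<^sub>R R - b *\<^sub>R G = \<kappa> *\<^sub>R T \<longleftrightarrow> (a * F - b) *\<^sub>R G + ((F - 1) * \<kappa>) *\<^sub>R T = 0"
proof -
  have "F *\<^sub>R R - b *\<^sub>R G - \<kappa> *\<^sub>R T = (a * F - b) *\<^sub>R G + ((F - 1) * \<kappa>) *\<^sub>R T"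
    unfolding assms by (simp add: algebra_simps)
  then show ?thesis by (metis eq_iff_diff_eq_0)
qed

context
  fixes U :: "(real^4) set" and g T :: field2 and \<kappa> \<Lambda> k :: real
  assumes metric: "spacetime_metric U g"
    and einstein: "einstein_solution U \<kappa> \<Lambda> g T"
    and constant_scalar: "\<forall>x\<in>U. ricci_scalar g x = k"
begin

lemma constant_scalar_fR_solution_iff:
  "fR_solution U \<kappa> f g T \<longleftrightarrow> (\<forall>x\<in>U. deriv f k *\<^sub>R ricci g x - (f k / 2) *\<^sub>R g x = \<kappa> *\<^sub>R T x)"
  using metric constant_scalar by (simp add: fR_solution_iff_constant_scalar spacetime_metric_open)

lemma constant_scalar_ricci: "x \<in> U \<Longrightarrow> ricci g x = \<kappa> *\<^sub>R T x + (k/2 - \<Lambda>) *\<^sub>R g x"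
  using einstein constant_scalar unfolding einstein_solution_def vec_eq_iff
  by (auto simp: algebra_simps)

lemma constant_scalar_trace:
  assumes "x \<in> U"
  shows "\<kappa> * metric_trace g x (T x) = 4 * \<Lambda> - k"
proof -
  have "k = metric_trace g x (\<kappa> *\<^sub>R T x + (k/2 - \<Lambda>) *\<^sub>R g x)"
    using assms constant_scalar constant_scalar_ricci by (simp add: ricci_scalar_eq_metric_trace)
  also have "\<dots> = \<kappa> * metric_trace g x (T x) + (k/2 - \<Lambda>) * 4"
    by (simp add: metric_trace_metric[OF metric assms])
  finally show ?thesis by simp
qed

lemma fR_solution_iff_residual_eq_0:
  "fR_solution U \<kappa> f g T \<longleftrightarrow>
    (\<forall>x\<in>U. \<forall>\<mu> \<nu>. ((k/2 - \<Lambda>) * deriv f k - (1/2) * f k) * g x $ \<mu> $ \<nu>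
                   + (deriv f k - 1) * \<kappa> * T x $ \<mu> $ \<nu> = 0)"
proof (unfold constant_scalar_fR_solution_iff, intro ball_cong refl)
  fix x assume "x \<in> U"
  let ?F = "deriv f k"
  have "?F *\<^sub>R ricci g x - (f k / 2) *\<^sub>R g x = \<kappa> *\<^sub>R T x \<longleftrightarrow>
      ((k/2 - \<Lambda>) * ?F - (1/2) * f k) *\<^sub>R g x + ((?F - 1) * \<kappa>) *\<^sub>R T x = 0"
    using scaled_field_equation_iff[OF constant_scalar_ricci[OF \<open>x \<in> U\<close>]] by simp
  then show "?F *\<^sub>R ricci g x - (f k / 2) *\<^sub>R g x = \<kappa> *\<^sub>R T x \<longleftrightarrow>
      (\<forall>\<mu> \<nu>. ((k/2 - \<Lambda>) * ?F - (1/2) * f k) * g x $ \<mu> $ \<nu> + (?F - 1) * \<kappa> * T x $ \<mu> $ \<nu> = 0)"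
    by (simp add: vec_eq_iff)
qed

lemma fR_solution_critical_value:
  assumes "U \<noteq> {}" "deriv f k = 0" "fR_solution U \<kappa> f g T"
  shows "f k = (k - 4 * \<Lambda>) / 2"
proof -
  obtain x where "x \<in> U" using assms(1) by blast
  then have "\<kappa> *\<^sub>R T x = - (f k / 2) *\<^sub>R g x"
    using assms(2,3) by (simp add: constant_scalar_fR_solution_iff)
  then have "\<kappa> * metric_trace g x (T x) = - (f k / 2) * metric_trace g x (g x)"
    by (metis metric_trace_scaleR)
  then show ?thesis
    using constant_scalar_trace metric_trace_metric[OF metric] \<open>x \<in> U\<close> by simp
qed

lemma fR_solution_if_ricci_flat:
  assumes "U \<noteq> {}" "deriv f k = 0" "f k = (k - 4 * \<Lambda>) / 2" and flat: "\<forall>x\<in>U. ricci g x = 0"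
  shows "fR_solution U \<kappa> f g T"
proof -
  obtain x0 where "x0 \<in> U" using assms(1) by blast
  then have "k = 0"
    using flat constant_scalar by (auto simp: ricci_scalar_eq_metric_trace)
  have "\<kappa> *\<^sub>R T x = \<Lambda> *\<^sub>R g x" if "x \<in> U" for x
    using constant_scalar_ricci[OF that] flat that \<open>k = 0\<close> by (simp add: algebra_simps)
  then show ?thesis
    using assms(2,3) \<open>k = 0\<close> by (simp add: constant_scalar_fR_solution_iff)
qed

lemma fR_solution_if_vacuum:
  assumes "U \<noteq> {}" "deriv f k = 0" "f k = (k - 4 * \<Lambda>) / 2" and vacuum: "\<forall>x\<in>U. T x = 0"
  shows "fR_solution U \<kappa> f g T"
proof -
  obtain x0 where "x0 \<in> U" using assms(1) by blast
  then have "k = 4 * \<Lambda>"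
    using vacuum constant_scalar_trace by simp
  then show ?thesis
    using assms(2,3) vacuum by (simp add: constant_scalar_fR_solution_iff)
qed

end

theorem mainTheorem1:
  fixes U :: "(real^4) set" and g T :: field2 and G c \<Lambda> k :: real and f :: "real \<Rightarrow> real"
  assumes "U \<noteq> {}"
    and "spacetime_metric U g"
    and "\<forall>x\<in>U. transpose (T x) = T x"
    and "G > 0" and "c > 0"
    and "einstein_solution U (kappa G c) \<Lambda> g T"
    and "\<forall>x\<in>U. ricci_scalar g x = k"
    and "\<forall>r. f differentiable (at r)"
  shows "(deriv f k \<noteq> 0 \<longrightarrow>
           (fR_solution U (kappa G c) f g T \<longleftrightarrow>
            (\<forall>x\<in>U. \<forall>\<mu> \<nu>. ((k/2 - \<Lambda>) * deriv f k - (1/2) * f k) * g x $ \<mu> $ \<nu>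
                           + (deriv f k - 1) * kappa G c * T x $ \<mu> $ \<nu> = 0)))
       \<and> (deriv f k = 0 \<and> f k \<noteq> (k - 4 * \<Lambda>) / 2 \<longrightarrow> \<not> fR_solution U (kappa G c) f g T)
       \<and> (deriv f k = 0 \<and> f k = (k - 4 * \<Lambda>) / 2 \<and>
           ((\<forall>x\<in>U. ricci g x = 0) \<or> (\<forall>x\<in>U. T x = 0))
           \<longrightarrow> fR_solution U (kappa G c) f g T)"
  using fR_solution_iff_residual_eq_0[OF assms(2,6,7)]
    fR_solution_critical_value[OF assms(2,6,7,1)]
    fR_solution_if_ricci_flat[OF assms(2,6,7,1)]
    fR_solution_if_vacuum[OF assms(2,6,7,1)]
  by blast

end
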